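(* Let $T\ge1$ and $\varepsilon>0$, and consider the MDP with states $\{1,2,3,4\}$ defined as follows. State 1 has two actions: one gives reward $\frac12$ and moves deterministically to state 2; the other gives reward $0$ and moves deterministically to state 3. State 2 has a single action giving reward $\frac12$ and moving deterministically to state 1. State 3 has a single action giving reward $\frac12$ and moving to state 3 with probability $1-\frac1T$ and to state 4 with probability $\frac1T$. State 4 has two actions: one gives reward $\frac12+\varepsilon$ and moves to state 4 with probability $1-\frac1T$ and to state 3 with probability $\frac1T$; the other gives reward $0$ and moves deterministically to state 2. Then $\|h^\star\|_{\mathrm{sp}}=\frac{\varepsilon T}2+\varepsilon+\frac12$, but there exists a policy $\pi$ with constant gain such that $\rho^\pi=\rho^\star-\frac\varepsilon2\mathbf 1$ and $\|h^\pi\|_{\mathrm{sp}}=\frac12$.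
   Context: Policies are stationary Markovian. Gain $\rho^\pi(s)=\lim_T\frac1T\mathbb{E}^\pi_s[\sum_{t<T}r(S_t,A_t)]$, $\rho^\star=\sup_\pi\rho^\pi$; bias $h^\pi(s)=\mathrm{C}\text{-}\lim_T\mathbb{E}^\pi_s[\sum_{t<T}(r(S_t,A_t)-\rho^\pi(S_t))]$; $h^\star$ is the bias of a Blackwell-optimal policy. $\|x\|_{\mathrm{sp}}=\max x-\min x$; $\mathbf 1$ is the all-ones vector. *)

theory Defs
  imports "HOL-Analysis.Analysis"
begin

definition is_policy :: "('s \<Rightarrow> 'a set) \<Rightarrow> ('s \<Rightarrow> 'a \<Rightarrow> real) \<Rightarrow> bool" where
  "is_policy A pol \<longleftrightarrow>
     (\<forall>s. (\<forall>a. 0 \<le> pol s a) \<and> (\<forall>a. a \<notin> A s \<longrightarrow> pol s a = 0) \<and> (\<Sum>a\<in>A s. pol s a) = 1)"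

definition P_pol :: "('s \<Rightarrow> 'a set) \<Rightarrow> ('s \<Rightarrow> 'a \<Rightarrow> 's \<Rightarrow> real) \<Rightarrow> ('s \<Rightarrow> 'a \<Rightarrow> real)
    \<Rightarrow> 's \<Rightarrow> 's \<Rightarrow> real" where
  "P_pol A P pol s s' = (\<Sum>a\<in>A s. pol s a * P s a s')"

definition r_pol :: "('s \<Rightarrow> 'a set) \<Rightarrow> ('s \<Rightarrow> 'a \<Rightarrow> real) \<Rightarrow> ('s \<Rightarrow> 'a \<Rightarrow> real) \<Rightarrow> 's \<Rightarrow> real" where
  "r_pol A r pol s = (\<Sum>a\<in>A s. pol s a * r s a)"

text \<open>t-step state distribution: dist t s s' = Pr^pi_s(S_t = s').\<close>
fun dist_pol :: "('s::finite \<Rightarrow> 'a set) \<Rightarrow> ('s \<Rightarrow> 'a \<Rightarrow> 's \<Rightarrow> real) \<Rightarrow> ('s \<Rightarrow> 'a \<Rightarrow> real)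
    \<Rightarrow> nat \<Rightarrow> 's \<Rightarrow> 's \<Rightarrow> real" where
  "dist_pol A P pol 0 s s' = (if s = s' then 1 else 0)"
| "dist_pol A P pol (Suc t) s s' = (\<Sum>s''\<in>UNIV. dist_pol A P pol t s s'' * P_pol A P pol s'' s')"

text \<open>E^pi_s[f(S_t)] (for f = r_pi this is E^pi_s[r(S_t,A_t)]).\<close>
definition expect_at :: "('s::finite \<Rightarrow> 'a set) \<Rightarrow> ('s \<Rightarrow> 'a \<Rightarrow> 's \<Rightarrow> real) \<Rightarrow> ('s \<Rightarrow> 'a \<Rightarrow> real)
    \<Rightarrow> nat \<Rightarrow> ('s \<Rightarrow> real) \<Rightarrow> 's \<Rightarrow> real" where
  "expect_at A P pol t f s = (\<Sum>s'\<in>UNIV. dist_pol A P pol t s s' * f s')"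

definition gain :: "('s::finite \<Rightarrow> 'a set) \<Rightarrow> ('s \<Rightarrow> 'a \<Rightarrow> 's \<Rightarrow> real) \<Rightarrow> ('s \<Rightarrow> 'a \<Rightarrow> real)
    \<Rightarrow> ('s \<Rightarrow> 'a \<Rightarrow> real) \<Rightarrow> 's \<Rightarrow> real" where
  "gain A P r pol s =
     lim (\<lambda>T. (\<Sum>t<T. expect_at A P pol t (r_pol A r pol) s) / real T)"

definition opt_gain :: "('s::finite \<Rightarrow> 'a set) \<Rightarrow> ('s \<Rightarrow> 'a \<Rightarrow> 's \<Rightarrow> real) \<Rightarrow> ('s \<Rightarrow> 'a \<Rightarrow> real)
    \<Rightarrow> 's \<Rightarrow> real" where
  "opt_gain A P r s = (SUP pol\<in>{pol. is_policy A pol}. gain A P r pol s)"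

definition cesaro_lim :: "(nat \<Rightarrow> real) \<Rightarrow> real" where
  "cesaro_lim x = lim (\<lambda>N. (\<Sum>T\<in>{1..N}. x T) / real N)"

definition bias :: "('s::finite \<Rightarrow> 'a set) \<Rightarrow> ('s \<Rightarrow> 'a \<Rightarrow> 's \<Rightarrow> real) \<Rightarrow> ('s \<Rightarrow> 'a \<Rightarrow> real)
    \<Rightarrow> ('s \<Rightarrow> 'a \<Rightarrow> real) \<Rightarrow> 's \<Rightarrow> real" where
  "bias A P r pol s =
     cesaro_lim (\<lambda>T. \<Sum>t<T. expect_at A P pol t
        (\<lambda>s'. r_pol A r pol s' - gain A P r pol s') s)"

definition disc_value :: "('s::finite \<Rightarrow> 'a set) \<Rightarrow> ('s \<Rightarrow> 'a \<Rightarrow> 's \<Rightarrow> real) \<Rightarrow> ('s \<Rightarrow> 'a \<Rightarrow> real)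
    \<Rightarrow> ('s \<Rightarrow> 'a \<Rightarrow> real) \<Rightarrow> real \<Rightarrow> 's \<Rightarrow> real" where
  "disc_value A P r pol \<gamma> s = (\<Sum>t. \<gamma> ^ t * expect_at A P pol t (r_pol A r pol) s)"

definition blackwell_optimal :: "('s::finite \<Rightarrow> 'a set) \<Rightarrow> ('s \<Rightarrow> 'a \<Rightarrow> 's \<Rightarrow> real)
    \<Rightarrow> ('s \<Rightarrow> 'a \<Rightarrow> real) \<Rightarrow> ('s \<Rightarrow> 'a \<Rightarrow> real) \<Rightarrow> bool" where
  "blackwell_optimal A P r pol \<longleftrightarrow> is_policy A pol \<and>
     (\<exists>\<gamma>0<1. \<forall>\<gamma>. \<gamma>0 < \<gamma> \<and> \<gamma> < 1 \<longrightarrow>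
        (\<forall>pol'. is_policy A pol' \<longrightarrow> (\<forall>s. disc_value A P r pol' \<gamma> s \<le> disc_value A P r pol \<gamma> s)))"

definition span :: "('s::finite \<Rightarrow> real) \<Rightarrow> real" where
  "span h = Max (range h) - Min (range h)"

datatype st = S1 | S2 | S3 | S4

lemma UNIV_st: "(UNIV :: st set) = {S1, S2, S3, S4}"
  using st.exhaust by auto

instance st :: finite
  by standard (simp add: UNIV_st)

fun exA :: "st \<Rightarrow> nat set" where
  "exA S1 = {0, 1}"
| "exA S2 = {0}"
| "exA S3 = {0}"
| "exA S4 = {0, 1}"

definition exP :: "real \<Rightarrow> st \<Rightarrow> nat \<Rightarrow> st \<Rightarrow> real" where
  "exP T s a s' =
     (if s = S1 \<and> a = 0 then (if s' = S2 then 1 else 0)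
      else if s = S1 \<and> a = 1 then (if s' = S3 then 1 else 0)
      else if s = S2 \<and> a = 0 then (if s' = S1 then 1 else 0)
      else if s = S3 \<and> a = 0 then (if s' = S3 then 1 - 1 / T else if s' = S4 then 1 / T else 0)
      else if s = S4 \<and> a = 0 then (if s' = S4 then 1 - 1 / T else if s' = S3 then 1 / T else 0)
      else if s = S4 \<and> a = 1 then (if s' = S2 then 1 else 0)
      else 0)"

definition exr :: "real \<Rightarrow> st \<Rightarrow> nat \<Rightarrow> real" where
  "exr \<epsilon> s a =
     (if s = S1 \<and> a = 0 then 1 / 2
      else if s = S1 \<and> a = 1 then 0
      else if s = S2 \<and> a = 0 then 1 / 2
      else if s = S3 \<and> a = 0 then 1 / 2
      else if s = S4 \<and> a = 0 then 1 / 2 + \<epsilon>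
      else 0)"

end

theory Submission
  imports Defs
begin

(* For a policy with transition matrix P, a solution of the Poisson equation g + h = r + P h with
   P g = g gives the partial reward sums n g + h - P^n h, so the gain is g; if moreover h = k - P k,
   the Cesaro averages of the partial sums of r - g telescope and the bias is h.  The Blackwell-optimal
   policy takes action 1 in state 1 and action 0 in state 4; it has gain 1/2 + e/2 and a bias ranging
   from -1/2 - e - e T/4 (state 2) to e T/4 (state 4).  The policy taking action 0 in state 1 and
   action 1 in state 4 ends up in the cycle 1 <-> 2: its gain is 1/2 and its bias only takes the values
   0 and -1/2.  The bias of the first policy is superharmonic for every policy, so no gain exceeds
   1/2 + e/2; that the averages defining the gain converge at all is seen from an explicit Poisson
   solution for each policy.  For discount factors above an explicit threshold, the discounted value of the first
   policy strictly penalises both deviating actions; the comparison principle for the discounted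
   Bellman equation then shows that this policy is the unique Blackwell-optimal one. *)

section \<open>Finite Markov chains\<close>

abbreviation kernel_apply :: "('s::finite \<Rightarrow> 's \<Rightarrow> real) \<Rightarrow> ('s \<Rightarrow> real) \<Rightarrow> 's \<Rightarrow> real" where
  "kernel_apply M f x \<equiv> \<Sum>y\<in>UNIV. M x y * f y"

definition stochastic :: "('s::finite \<Rightarrow> 's \<Rightarrow> real) \<Rightarrow> bool" where
  "stochastic M \<longleftrightarrow> (\<forall>x y. 0 \<le> M x y) \<and> (\<forall>x. (\<Sum>y\<in>UNIV. M x y) = 1)"

lemma kernel_apply_const: "stochastic M \<Longrightarrow> kernel_apply M (\<lambda>_. c) x = c"
  unfolding stochastic_def by (simp add: sum_distrib_right[symmetric])

lemma sum_kernel_apply_swap: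
  fixes a :: "'s::finite \<Rightarrow> real" and M :: "'s \<Rightarrow> 's \<Rightarrow> real"
  shows "(\<Sum>x\<in>UNIV. (\<Sum>y\<in>UNIV. a y * M y x) * f x) = (\<Sum>y\<in>UNIV. a y * kernel_apply M f y)"
proof -
  have "(\<Sum>x\<in>UNIV. (\<Sum>y\<in>UNIV. a y * M y x) * f x) = (\<Sum>x\<in>UNIV. \<Sum>y\<in>UNIV. a y * (M y x * f x))"
    by (simp add: sum_distrib_right mult.assoc)
  also have "\<dots> = (\<Sum>y\<in>UNIV. \<Sum>x\<in>UNIV. a y * (M y x * f x))"
    by (rule sum.swap)
  finally show ?thesis
    by (simp add: sum_distrib_left)
qed

lemma dist_pol_Suc':
  "dist_pol A P pol (Suc t) s s' = kernel_apply (P_pol A P pol) (\<lambda>u. dist_pol A P pol t u s') s"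
proof (induction t arbitrary: s')
  case 0
  show ?case by (simp add: of_bool_def[symmetric])
next
  case (Suc t)
  have "dist_pol A P pol (Suc (Suc t)) s s'
      = (\<Sum>s''\<in>UNIV. kernel_apply (P_pol A P pol) (\<lambda>u. dist_pol A P pol t u s'') s * P_pol A P pol s'' s')"
    using Suc by simp
  also have "\<dots> = kernel_apply (P_pol A P pol) (\<lambda>u. dist_pol A P pol (Suc t) u s') s"
    by (simp only: sum_kernel_apply_swap dist_pol.simps(2))
  finally show ?case .
qed

lemma expect_at_0 [simp]: "expect_at A P pol 0 f s = f s"
  by (simp add: expect_at_def of_bool_def[symmetric])

lemma expect_at_Suc:
  "expect_at A P pol (Suc t) f s = expect_at A P pol t (kernel_apply (P_pol A P pol) f) s"
  unfolding expect_at_def by (simp add: sum_kernel_apply_swap)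

lemma expect_at_Suc':
  "expect_at A P pol (Suc t) f s = kernel_apply (P_pol A P pol) (\<lambda>u. expect_at A P pol t f u) s"
  unfolding expect_at_def dist_pol_Suc' by (rule sum_kernel_apply_swap)

lemma expect_at_add:
  "expect_at A P pol t (\<lambda>x. f x + g x) s = expect_at A P pol t f s + expect_at A P pol t g s"
  unfolding expect_at_def by (simp add: distrib_left sum.distrib)

lemma expect_at_diff:
  "expect_at A P pol t (\<lambda>x. f x - g x) s = expect_at A P pol t f s - expect_at A P pol t g s"
  unfolding expect_at_def by (simp add: right_diff_distrib sum_subtractf)

lemma stochastic_dist_pol:
  assumes "stochastic (P_pol A P pol)"
  shows "stochastic (dist_pol A P pol t)"
proof (induction t)
  case 0
  show ?case by (simp add: stochastic_def)
next
  case (Suc t)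
  have "(\<Sum>s'\<in>UNIV. dist_pol A P pol (Suc t) s s') = 1" for s
    using sum_kernel_apply_swap[of "dist_pol A P pol t s" "P_pol A P pol" "\<lambda>_. 1"]
      Suc assms by (simp add: stochastic_def)
  moreover have "0 \<le> dist_pol A P pol (Suc t) s s'" for s s'
    using Suc assms by (auto simp: stochastic_def intro!: sum_nonneg)
  ultimately show ?case by (simp add: stochastic_def)
qed

lemma expect_at_const:
  "stochastic (P_pol A P pol) \<Longrightarrow> expect_at A P pol t (\<lambda>_. c) s = c"
  unfolding expect_at_def by (rule kernel_apply_const[OF stochastic_dist_pol])

lemma expect_at_mono:
  assumes "stochastic (P_pol A P pol)" "\<And>x. f x \<le> g x"
  shows "expect_at A P pol t f s \<le> expect_at A P pol t g s"
  using stochastic_dist_pol[OF assms(1), of t] assms(2) unfolding expect_at_def stochastic_def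
  by (auto intro!: sum_mono mult_left_mono)

lemma expect_at_abs_le:
  assumes "stochastic (P_pol A P pol)"
  shows "\<bar>expect_at A P pol t f s\<bar> \<le> (\<Sum>y\<in>UNIV. \<bar>f y\<bar>)"
proof -
  have bound: "\<bar>f x\<bar> \<le> (\<Sum>y\<in>UNIV. \<bar>f y\<bar>)" for x
    by (rule member_le_sum) auto
  have "- (\<Sum>y\<in>UNIV. \<bar>f y\<bar>) \<le> f x" "f x \<le> (\<Sum>y\<in>UNIV. \<bar>f y\<bar>)" for x
    using abs_le_D1[OF bound] abs_le_D2[OF bound] by (simp_all add: minus_le_iff)
  then have "expect_at A P pol t (\<lambda>_. - (\<Sum>y\<in>UNIV. \<bar>f y\<bar>)) s \<le> expect_at A P pol t f s"
    and "expect_at A P pol t f s \<le> expect_at A P pol t (\<lambda>_. \<Sum>y\<in>UNIV. \<bar>f y\<bar>) s"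
    by (auto intro!: expect_at_mono[OF assms])
  then show ?thesis
    by (simp add: expect_at_const[OF assms] abs_le_iff)
qed

lemma expect_at_harmonic:
  "(\<And>x. kernel_apply (P_pol A P pol) g x = g x) \<Longrightarrow> expect_at A P pol t g s = g s"
  by (induction t arbitrary: s) (simp_all add: expect_at_Suc)

definition poisson_solution ::
    "('s::finite \<Rightarrow> 's \<Rightarrow> real) \<Rightarrow> ('s \<Rightarrow> real) \<Rightarrow> ('s \<Rightarrow> real) \<Rightarrow> ('s \<Rightarrow> real) \<Rightarrow> bool" where
  "poisson_solution M R g h \<longleftrightarrow>
     (\<forall>x. kernel_apply M g x = g x) \<and> (\<forall>x. g x + h x = R x + kernel_apply M h x)"

lemma expect_at_sum_poisson:
  assumes "poisson_solution (P_pol A P pol) R g h"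
  shows "(\<Sum>t<n. expect_at A P pol t R s) = real n * g s + h s - expect_at A P pol n h s"
proof (induction n)
  case 0
  show ?case by simp
next
  case (Suc n)
  have harmonic: "\<And>x. kernel_apply (P_pol A P pol) g x = g x"
    and poisson: "\<And>x. g x + h x = R x + kernel_apply (P_pol A P pol) h x"
    using assms unfolding poisson_solution_def by auto
  have "R = (\<lambda>x. (g x + h x) - kernel_apply (P_pol A P pol) h x)"
    using poisson by (auto simp: algebra_simps)
  then have "expect_at A P pol n R s = g s + expect_at A P pol n h s - expect_at A P pol (Suc n) h s"
    by (simp add: expect_at_diff expect_at_add expect_at_harmonic[OF harmonic] expect_at_Suc)
  with Suc show ?case by (simp add: algebra_simps)
qed

lemma bounded_divide_real_tendsto_0:
  assumes "\<And>n. \<bar>c n\<bar> \<le> (B::real)"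
  shows "(\<lambda>n. c n / real n) \<longlonglongrightarrow> 0"
proof (rule Lim_null_comparison)
  show "\<forall>\<^sub>F n in sequentially. norm (c n / real n) \<le> B / real n"
    using assms by (intro always_eventually allI) (simp add: abs_divide divide_right_mono)
  show "(\<lambda>n. B / real n) \<longlonglongrightarrow> 0" by (rule lim_const_over_n)
qed

lemma poisson_averages_tendsto:
  assumes stoch: "stochastic (P_pol A P pol)" and poisson: "poisson_solution (P_pol A P pol) R g h"
  shows "(\<lambda>n. (\<Sum>t<n. expect_at A P pol t R s) / real n) \<longlonglongrightarrow> g s"
proof -
  have "\<bar>h s - expect_at A P pol n h s\<bar> \<le> \<bar>h s\<bar> + (\<Sum>y\<in>UNIV. \<bar>h y\<bar>)" for n
    using expect_at_abs_le[OF stoch, of n h s] by linarith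
  then have "(\<lambda>n. g s + (h s - expect_at A P pol n h s) / real n) \<longlonglongrightarrow> g s + 0"
    by (intro tendsto_add tendsto_const bounded_divide_real_tendsto_0)
  moreover have "\<forall>\<^sub>F n in sequentially. g s + (h s - expect_at A P pol n h s) / real n
      = (\<Sum>t<n. expect_at A P pol t R s) / real n"
    using eventually_ge_at_top[of 1]
    by eventually_elim (simp add: expect_at_sum_poisson[OF poisson] field_simps)
  ultimately show ?thesis
    using tendsto_cong by force
qed

lemma gain_eq_poisson:
  assumes "stochastic (P_pol A P pol)" "poisson_solution (P_pol A P pol) (r_pol A r pol) g h"
  shows "gain A P r pol s = g s"
  unfolding gain_def using poisson_averages_tendsto[OF assms] by (rule limI)

lemma bias_eq_poisson:
  assumes stoch: "stochastic (P_pol A P pol)"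
    and poisson: "poisson_solution (P_pol A P pol) (r_pol A r pol) g h"
    and potential: "\<And>x. h x = k x - kernel_apply (P_pol A P pol) k x"
  shows "bias A P r pol s = h s"
proof -
  define E where "E n = expect_at A P pol n k s" for n
  have gain: "gain A P r pol x = g x" for x
    by (rule gain_eq_poisson[OF stoch poisson])
  have "h = (\<lambda>x. k x - kernel_apply (P_pol A P pol) k x)"
    using potential by auto
  then have Eh: "expect_at A P pol n h s = E n - E (Suc n)" for n
    by (simp add: E_def expect_at_diff expect_at_Suc)
  have "(\<Sum>t<n. expect_at A P pol t (\<lambda>x. r_pol A r pol x - gain A P r pol x) s)
      = real n * 0 + h s - expect_at A P pol n h s" for n
    by (rule expect_at_sum_poisson) (use poisson in \<open>simp add: poisson_solution_def gain algebra_simps\<close>)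
  then have partial: "(\<Sum>t<n. expect_at A P pol t (\<lambda>x. r_pol A r pol x - gain A P r pol x) s)
      = h s - (E n - E (Suc n))" for n
    by (simp add: Eh)
  have cesaro: "(\<Sum>n\<in>{1..N}. h s - (E n - E (Suc n))) = real N * h s - (E 1 - E (Suc N))" for N
    using sum_Suc_diff[of 1 N E] by (simp add: sum_subtractf)
  have "\<bar>E 1 - E (Suc n)\<bar> \<le> \<bar>E 1\<bar> + (\<Sum>y\<in>UNIV. \<bar>k y\<bar>)" for n
    using expect_at_abs_le[OF stoch, of "Suc n" k s] unfolding E_def by linarith
  then have "(\<lambda>N. h s - (E 1 - E (Suc N)) / real N) \<longlonglongrightarrow> h s - 0"
    by (intro tendsto_diff tendsto_const bounded_divide_real_tendsto_0)
  moreover have "\<forall>\<^sub>F N in sequentially. h s - (E 1 - E (Suc N)) / real N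
      = (\<Sum>n\<in>{1..N}. \<Sum>t<n. expect_at A P pol t (\<lambda>x. r_pol A r pol x - gain A P r pol x) s) / real N"
    using eventually_ge_at_top[of 1]
    by eventually_elim (simp only: partial cesaro, simp add: field_simps)
  ultimately show ?thesis
    unfolding bias_def cesaro_lim_def using tendsto_cong by (force intro: limI)
qed

lemma gain_le_superharmonic:
  assumes stoch: "stochastic (P_pol A P pol)"
    and conv: "convergent (\<lambda>n. (\<Sum>t<n. expect_at A P pol t (r_pol A r pol) s) / real n)"
    and super: "\<And>x. r_pol A r pol x + kernel_apply (P_pol A P pol) H x \<le> c + H x"
  shows "gain A P r pol s \<le> c"
proof -
  have partial: "(\<Sum>t<n. expect_at A P pol t (r_pol A r pol) s) \<le> real n * c + (H s - expect_at A P pol n H s)" for n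
  proof (induction n)
    case 0
    show ?case by simp
  next
    case (Suc n)
    have "expect_at A P pol n (r_pol A r pol) s
        \<le> expect_at A P pol n (\<lambda>x. (c + H x) - kernel_apply (P_pol A P pol) H x) s"
      using super by (intro expect_at_mono[OF stoch]) (auto simp: algebra_simps)
    also have "\<dots> = c + expect_at A P pol n H s - expect_at A P pol (Suc n) H s"
      by (simp add: expect_at_diff expect_at_add expect_at_const[OF stoch] expect_at_Suc)
    finally show ?case using Suc by (simp add: algebra_simps)
  qed
  have "\<bar>H s - expect_at A P pol n H s\<bar> \<le> \<bar>H s\<bar> + (\<Sum>y\<in>UNIV. \<bar>H y\<bar>)" for n
    using expect_at_abs_le[OF stoch, of n H s] by linarith
  then have "(\<lambda>n. c + (H s - expect_at A P pol n H s) / real n) \<longlonglongrightarrow> c + 0"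
    by (intro tendsto_add tendsto_const bounded_divide_real_tendsto_0)
  moreover have "\<forall>n\<ge>1. (\<Sum>t<n. expect_at A P pol t (r_pol A r pol) s) / real n
      \<le> c + (H s - expect_at A P pol n H s) / real n"
    using partial by (auto simp: field_simps)
  ultimately show ?thesis
    unfolding gain_def using conv by (auto simp: convergent_LIMSEQ_iff intro: LIMSEQ_le)
qed

lemma disc_value_bellman:
  assumes stoch: "stochastic (P_pol A P pol)" and "0 \<le> \<gamma>" "\<gamma> < 1"
  shows "disc_value A P r pol \<gamma> s
     = r_pol A r pol s + \<gamma> * kernel_apply (P_pol A P pol) (disc_value A P r pol \<gamma>) s"
proof -
  define e where "e t y = \<gamma> ^ t * expect_at A P pol t (r_pol A r pol) y" for t y
  have summable: "summable (\<lambda>t. e t y)" for y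
  proof (rule summable_comparison_test)
    show "summable (\<lambda>t. (\<Sum>y\<in>UNIV. \<bar>r_pol A r pol y\<bar>) * \<gamma> ^ t)"
      using assms by (intro summable_mult summable_geometric) simp
    show "\<exists>N. \<forall>t\<ge>N. norm (e t y) \<le> (\<Sum>y\<in>UNIV. \<bar>r_pol A r pol y\<bar>) * \<gamma> ^ t"
      using expect_at_abs_le[OF stoch] \<open>0 \<le> \<gamma>\<close>
      by (auto simp: e_def abs_mult mult.commute mult_left_mono)
  qed
  have "(\<Sum>t. e (Suc t) s) = (\<Sum>t. \<gamma> * (\<Sum>y\<in>UNIV. P_pol A P pol s y * e t y))"
    by (simp add: e_def expect_at_Suc' sum_distrib_left mult_ac)
  also have "\<dots> = \<gamma> * (\<Sum>y\<in>UNIV. \<Sum>t. P_pol A P pol s y * e t y)"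
    by (simp add: suminf_mult summable_sum summable_mult summable suminf_sum)
  also have "\<dots> = \<gamma> * kernel_apply (P_pol A P pol) (\<lambda>y. \<Sum>t. e t y) s"
    by (simp add: suminf_mult summable)
  finally have "(\<Sum>t. e t s) - e 0 s = \<gamma> * kernel_apply (P_pol A P pol) (\<lambda>y. \<Sum>t. e t y) s"
    by (simp add: suminf_split_head[OF summable])
  then show ?thesis
    by (simp add: disc_value_def e_def[abs_def])
qed

lemma discounted_comparison:
  fixes M :: "'s::finite \<Rightarrow> 's \<Rightarrow> real"
  assumes stoch: "stochastic M" and "0 \<le> \<gamma>" "\<gamma> < 1"
    and super: "\<And>x. R x + \<gamma> * kernel_apply M X x \<le> X x"
    and sub: "\<And>x. Y x \<le> R x + \<gamma> * kernel_apply M Y x"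
  shows "Y s \<le> X s"
proof -
  define D where "D x = X x - Y x" for x
  define m where "m = Min (range D)"
  have m_le: "m \<le> D y" for y
    unfolding m_def by (rule Min_le) auto
  have "m \<in> range D"
    unfolding m_def by (rule Min_in) auto
  then obtain x0 where x0: "D x0 = m"
    by auto
  have "\<gamma> * m = \<gamma> * kernel_apply M (\<lambda>_. m) x0"
    by (simp add: kernel_apply_const[OF stoch])
  also have "\<dots> \<le> \<gamma> * kernel_apply M D x0"
    using stoch m_le \<open>0 \<le> \<gamma>\<close> unfolding stochastic_def
    by (intro mult_left_mono sum_mono) auto
  also have "kernel_apply M D x0 = kernel_apply M X x0 - kernel_apply M Y x0"
    by (simp add: D_def right_diff_distrib sum_subtractf)
  also have "\<gamma> * (kernel_apply M X x0 - kernel_apply M Y x0) \<le> m"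
    using super[of x0] sub[of x0] x0 unfolding D_def by (simp add: right_diff_distrib)
  finally have "0 \<le> (1 - \<gamma>) * m"
    by (simp add: algebra_simps)
  then have "0 \<le> m"
    using \<open>\<gamma> < 1\<close> by (simp add: zero_le_mult_iff)
  then show ?thesis
    using m_le[of s] by (simp add: D_def)
qed

lemma span_eqI:
  fixes h :: "'s::finite \<Rightarrow> real"
  assumes "\<And>x. h x \<le> h a" "\<And>x. h b \<le> h x"
  shows "span h = h a - h b"
proof -
  have "Max (range h) = h a" by (rule Max_eqI) (use assms in auto)
  moreover have "Min (range h) = h b" by (rule Min_eqI) (use assms in auto)
  ultimately show ?thesis unfolding span_def by simp
qed

section \<open>The four-state example\<close>

lemma is_policy_exAD:
  assumes "is_policy exA pol"
  shows "pol S2 0 = 1" "pol S3 0 = 1" "pol S1 1 = 1 - pol S1 0" "pol S4 1 = 1 - pol S4 0"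
    "0 \<le> pol S1 0" "pol S1 0 \<le> 1" "0 \<le> pol S4 0" "pol S4 0 \<le> 1"
proof -
  have nonneg: "0 \<le> pol s a" and total: "(\<Sum>a\<in>exA s. pol s a) = 1" for s a
    using assms unfolding is_policy_def by auto
  show "pol S2 0 = 1" "pol S3 0 = 1" "pol S1 1 = 1 - pol S1 0" "pol S4 1 = 1 - pol S4 0"
    using total[of S1] total[of S2] total[of S3] total[of S4] by simp_all
  then show "0 \<le> pol S1 0" "pol S1 0 \<le> 1" "0 \<le> pol S4 0" "pol S4 0 \<le> 1"
    using nonneg[of S1 0] nonneg[of S1 1] nonneg[of S4 0] nonneg[of S4 1] by simp_all
qed

lemma kernel_apply_exP:
  assumes "is_policy exA pol"
  shows "kernel_apply (P_pol exA (exP T) pol) f S1 = pol S1 0 * f S2 + (1 - pol S1 0) * f S3"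
    and "kernel_apply (P_pol exA (exP T) pol) f S2 = f S1"
    and "kernel_apply (P_pol exA (exP T) pol) f S3 = (1 - 1/T) * f S3 + 1/T * f S4"
    and "kernel_apply (P_pol exA (exP T) pol) f S4
       = pol S4 0 * ((1 - 1/T) * f S4 + 1/T * f S3) + (1 - pol S4 0) * f S2"
proof -
  \<comment> \<open>unfolding exA produces action 1 as Suc 0\<close>
  have "pol S1 (Suc 0) = 1 - pol S1 0" "pol S4 (Suc 0) = 1 - pol S4 0"
    using is_policy_exAD[OF assms] by simp_all
  with is_policy_exAD[OF assms] show
    "kernel_apply (P_pol exA (exP T) pol) f S1 = pol S1 0 * f S2 + (1 - pol S1 0) * f S3"
    "kernel_apply (P_pol exA (exP T) pol) f S2 = f S1"
    "kernel_apply (P_pol exA (exP T) pol) f S3 = (1 - 1/T) * f S3 + 1/T * f S4"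
    "kernel_apply (P_pol exA (exP T) pol) f S4
       = pol S4 0 * ((1 - 1/T) * f S4 + 1/T * f S3) + (1 - pol S4 0) * f S2"
    by (simp_all add: P_pol_def exP_def UNIV_st ring_distribs)
qed

lemma r_pol_exr:
  assumes "is_policy exA pol"
  shows "r_pol exA (exr e) pol S1 = pol S1 0 / 2" "r_pol exA (exr e) pol S2 = 1/2"
    "r_pol exA (exr e) pol S3 = 1/2" "r_pol exA (exr e) pol S4 = pol S4 0 * (1/2 + e)"
  using is_policy_exAD[OF assms] by (simp_all add: r_pol_def exr_def)

lemma stochastic_exP:
  assumes pol: "is_policy exA pol" and "T \<ge> 1"
  shows "stochastic (P_pol exA (exP T) pol)"
  unfolding stochastic_def
proof (intro conjI allI)
  fix x y
  have "0 \<le> exP T s a s'" for s a s'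
    using \<open>T \<ge> 1\<close> unfolding exP_def by auto
  then show "0 \<le> P_pol exA (exP T) pol x y"
    using pol unfolding P_pol_def is_policy_def by (auto intro!: sum_nonneg)
next
  fix x
  have "(\<Sum>y\<in>UNIV. P_pol exA (exP T) pol x y) = kernel_apply (P_pol exA (exP T) pol) (\<lambda>_. 1) x"
    by simp
  also have "\<dots> = 1"
    by (cases x) (simp_all only: kernel_apply_exP[OF pol], simp_all)
  finally show "(\<Sum>y\<in>UNIV. P_pol exA (exP T) pol x y) = 1" .
qed

definition det_pol :: "('s \<Rightarrow> 'a) \<Rightarrow> 's \<Rightarrow> 'a \<Rightarrow> real" where
  "det_pol d s a = (if a = d s then 1 else 0)"

lemma is_policy_det_pol:
  assumes "\<And>s. finite (A s)" "\<And>s. d s \<in> A s"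
  shows "is_policy A (det_pol d)"
  using assms unfolding is_policy_def det_pol_def by (auto simp: of_bool_def[symmetric])

definition star_pol :: "st \<Rightarrow> nat \<Rightarrow> real" where
  "star_pol = det_pol (\<lambda>s. if s = S1 then 1 else 0)"

definition cycle_pol :: "st \<Rightarrow> nat \<Rightarrow> real" where
  "cycle_pol = det_pol (\<lambda>s. if s = S4 then 1 else 0)"

lemma finite_exA: "finite (exA s)" and zero_in_exA: "0 \<in> exA s"
  by (cases s; simp)+

lemma is_policy_star_pol: "is_policy exA star_pol"
  unfolding star_pol_def by (rule is_policy_det_pol) (simp_all add: finite_exA zero_in_exA)

lemma is_policy_cycle_pol: "is_policy exA cycle_pol"
  unfolding cycle_pol_def by (rule is_policy_det_pol) (simp_all add: finite_exA zero_in_exA)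

lemma star_pol_simps [simp]: "star_pol S1 0 = 0" "star_pol S4 0 = 1"
  by (simp_all add: star_pol_def det_pol_def)

lemma cycle_pol_simps [simp]: "cycle_pol S1 0 = 1" "cycle_pol S4 0 = 0"
  by (simp_all add: cycle_pol_def det_pol_def)

lemma policy_eq_star_pol:
  assumes pol: "is_policy exA pol" and "pol S1 0 = 0" "pol S4 0 = 1"
  shows "pol = star_pol"
proof (intro ext)
  fix s a
  have "a \<notin> exA s \<Longrightarrow> pol s a = 0"
    using pol unfolding is_policy_def by auto
  then show "pol s a = star_pol s a"
    using is_policy_exAD[OF pol] assms(2,3)
    by (cases s; cases "a = 0"; cases "a = 1") (auto simp: star_pol_def det_pol_def)
qed

definition h_star :: "real \<Rightarrow> real \<Rightarrow> st \<Rightarrow> real" where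
  "h_star T e s = (case s of S1 \<Rightarrow> -1/2 - e/2 - e*T/4 | S2 \<Rightarrow> -1/2 - e - e*T/4
      | S3 \<Rightarrow> - e*T/4 | S4 \<Rightarrow> e*T/4)"

definition k_star :: "real \<Rightarrow> real \<Rightarrow> st \<Rightarrow> real" where
  "k_star T e s = (case s of S1 \<Rightarrow> -1/2 - e/2 - e*T/4 | S2 \<Rightarrow> -1 - 3*e/2 - e*T/2
      | S3 \<Rightarrow> 0 | S4 \<Rightarrow> e*T^2/4)"

definition h_cycle :: "st \<Rightarrow> real" where
  "h_cycle s = (case s of S1 \<Rightarrow> 0 | S2 \<Rightarrow> 0 | S3 \<Rightarrow> -1/2 | S4 \<Rightarrow> -1/2)"

definition k_cycle :: "real \<Rightarrow> st \<Rightarrow> real" where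
  "k_cycle T s = (case s of S1 \<Rightarrow> 0 | S2 \<Rightarrow> 0 | S3 \<Rightarrow> -1/2 - T/2 | S4 \<Rightarrow> -1/2)"

context
  fixes T e :: real
  assumes T: "T \<ge> 1" and e: "e > 0"
begin

lemma poisson_solution_star:
  "poisson_solution (P_pol exA (exP T) star_pol) (r_pol exA (exr e) star_pol) (\<lambda>_. 1/2 + e/2) (h_star T e)"
  unfolding poisson_solution_def
proof (intro conjI allI)
  fix x
  show "kernel_apply (P_pol exA (exP T) star_pol) (\<lambda>_. 1/2 + e/2) x = 1/2 + e/2"
    by (rule kernel_apply_const[OF stochastic_exP[OF is_policy_star_pol T]])
  show "1/2 + e/2 + h_star T e x
      = r_pol exA (exr e) star_pol x + kernel_apply (P_pol exA (exP T) star_pol) (h_star T e) x"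
    using T by (cases x) (simp_all only: kernel_apply_exP[OF is_policy_star_pol] r_pol_exr[OF is_policy_star_pol],
      simp_all add: h_star_def field_simps)
qed

lemma h_star_potential:
  "h_star T e x = k_star T e x - kernel_apply (P_pol exA (exP T) star_pol) (k_star T e) x"
  using T by (cases x) (simp_all only: kernel_apply_exP[OF is_policy_star_pol],
    simp_all add: h_star_def k_star_def field_simps power2_eq_square)

lemma poisson_solution_cycle:
  "poisson_solution (P_pol exA (exP T) cycle_pol) (r_pol exA (exr e) cycle_pol) (\<lambda>_. 1/2) h_cycle"
  unfolding poisson_solution_def
proof (intro conjI allI)
  fix x
  show "kernel_apply (P_pol exA (exP T) cycle_pol) (\<lambda>_. 1/2) x = 1/2"
    by (rule kernel_apply_const[OF stochastic_exP[OF is_policy_cycle_pol T]])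
  show "1/2 + h_cycle x
      = r_pol exA (exr e) cycle_pol x + kernel_apply (P_pol exA (exP T) cycle_pol) h_cycle x"
    using T by (cases x) (simp_all only: kernel_apply_exP[OF is_policy_cycle_pol] r_pol_exr[OF is_policy_cycle_pol],
      simp_all add: h_cycle_def field_simps)
qed

lemma h_cycle_potential:
  "h_cycle x = k_cycle T x - kernel_apply (P_pol exA (exP T) cycle_pol) (k_cycle T) x"
  using T by (cases x) (simp_all only: kernel_apply_exP[OF is_policy_cycle_pol],
    simp_all add: h_cycle_def k_cycle_def field_simps)

lemma gain_star: "gain exA (exP T) (exr e) star_pol s = 1/2 + e/2"
  by (rule gain_eq_poisson[OF stochastic_exP[OF is_policy_star_pol T] poisson_solution_star])

lemma bias_star: "bias exA (exP T) (exr e) star_pol = h_star T e"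
  using bias_eq_poisson[OF stochastic_exP[OF is_policy_star_pol T] poisson_solution_star h_star_potential]
  by auto

lemma gain_cycle: "gain exA (exP T) (exr e) cycle_pol s = 1/2"
  by (rule gain_eq_poisson[OF stochastic_exP[OF is_policy_cycle_pol T] poisson_solution_cycle])

lemma bias_cycle: "bias exA (exP T) (exr e) cycle_pol = h_cycle"
  using bias_eq_poisson[OF stochastic_exP[OF is_policy_cycle_pol T] poisson_solution_cycle h_cycle_potential]
  by auto

lemma span_h_star: "span (h_star T e) = e * T / 2 + e + 1/2"
proof -
  have "0 \<le> T * e" "0 \<le> e * T" using e T by simp_all
  then have "span (h_star T e) = h_star T e S4 - h_star T e S2"
    using e by (intro span_eqI; case_tac x) (auto simp: h_star_def)
  then show ?thesis by (simp add: h_star_def)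
qed

lemma span_h_cycle: "span h_cycle = 1/2"
proof -
  have "span h_cycle = h_cycle S1 - h_cycle S3"
    by (intro span_eqI; case_tac x) (auto simp: h_cycle_def)
  then show ?thesis by (simp add: h_cycle_def)
qed

lemma h_star_superharmonic:
  assumes pol: "is_policy exA pol"
  shows "r_pol exA (exr e) pol x + kernel_apply (P_pol exA (exP T) pol) (h_star T e) x
    \<le> 1/2 + e/2 + h_star T e x"
proof -
  have p: "0 \<le> pol S1 0 * e" using is_policy_exAD[OF pol] e by simp
  have q: "0 \<le> (1 - pol S4 0) * (1 + 3 * e / 2 + e * T / 2)"
    using is_policy_exAD[OF pol] e T by (intro mult_nonneg_nonneg) auto
  have "r_pol exA (exr e) pol x + kernel_apply (P_pol exA (exP T) pol) (h_star T e) x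
    = 1/2 + e/2 + h_star T e x - (if x = S1 then pol S1 0 * e
        else if x = S4 then (1 - pol S4 0) * (1 + 3 * e / 2 + e * T / 2) else 0)"
    using T by (cases x) (simp_all only: kernel_apply_exP[OF pol] r_pol_exr[OF pol],
      simp_all add: h_star_def field_simps)
  then show ?thesis
    using p q by (auto split: if_splits)
qed

lemma poisson_solution_two_recurrent_classes:
  assumes pol: "is_policy exA pol" and "pol S1 0 = 1" "pol S4 0 = 1"
  shows "\<exists>g h. poisson_solution (P_pol exA (exP T) pol) (r_pol exA (exr e) pol) g h"
proof (intro exI)
  let ?g = "\<lambda>s. case s of S1 \<Rightarrow> 1/2 | S2 \<Rightarrow> 1/2 | S3 \<Rightarrow> 1/2 + e/2 | S4 \<Rightarrow> 1/2 + e/2"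
  let ?h = "\<lambda>s. case s of S1 \<Rightarrow> 0 | S2 \<Rightarrow> 0 | S3 \<Rightarrow> - e*T/4 | S4 \<Rightarrow> e*T/4"
  show "poisson_solution (P_pol exA (exP T) pol) (r_pol exA (exr e) pol) ?g ?h"
    unfolding poisson_solution_def using T assms(2,3)
    by (intro conjI allI; case_tac x)
      (simp_all only: kernel_apply_exP[OF pol] r_pol_exr[OF pol], simp_all add: field_simps)
qed

lemma poisson_solution_recurrent_34:
  assumes pol: "is_policy exA pol" and p: "pol S1 0 \<noteq> 1" and q: "pol S4 0 = 1"
  shows "\<exists>g h. poisson_solution (P_pol exA (exP T) pol) (r_pol exA (exr e) pol) g h"
proof (intro exI)
  define p where "p = pol S1 0"
  define h1 where "h1 = - e*T/4 - 1/2 - e * (1 + p) / (2 * (1 - p))"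
  let ?h = "\<lambda>s. case s of S1 \<Rightarrow> h1 | S2 \<Rightarrow> h1 - e/2 | S3 \<Rightarrow> - e*T/4 | S4 \<Rightarrow> e*T/4"
  have "1 - p \<noteq> 0" using p by (simp add: p_def)
  then show "poisson_solution (P_pol exA (exP T) pol) (r_pol exA (exr e) pol) (\<lambda>_. 1/2 + e/2) ?h"
    unfolding poisson_solution_def using T q
    by (intro conjI allI; case_tac x)
      (simp_all only: kernel_apply_exP[OF pol] r_pol_exr[OF pol] p_def[symmetric],
       simp_all add: h1_def field_simps)
qed

text \<open>Normalising h S2 = 0, the Poisson equations at S2, S3 and S4 express h S1, h S3 and
  h S4 through the gain c; the remaining equation at S1 is then linear in c.\<close>

lemma poisson_solution_recurrent_2:
  assumes pol: "is_policy exA pol" and q: "pol S4 0 \<noteq> 1"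
  shows "\<exists>g h. poisson_solution (P_pol exA (exP T) pol) (r_pol exA (exr e) pol) g h"
proof (intro exI)
  define p where "p = pol S1 0"
  define q where "q = pol S4 0"
  have p01: "0 \<le> p" "p \<le> 1" and q01: "0 \<le> q" "q < 1"
    using is_policy_exAD[OF pol] q by (auto simp: p_def q_def)
  define c where "c = ((1 - p) * q * (1 + e) + (1 - q) * (1 + p) / 2 + (1 - q) * (1 - p) * T / 2)
    / (2 * (1 - q) + (1 - q) * (1 - p) * T + (1 - p) * (1 + q))"
  define h4 where "h4 = (q * (1 + e) - c * (1 + q)) / (1 - q)"
  define h3 where "h3 = h4 - T * (c - 1/2)"
  let ?h = "\<lambda>s. case s of S1 \<Rightarrow> c - 1/2 | S2 \<Rightarrow> 0 | S3 \<Rightarrow> h3 | S4 \<Rightarrow> h4"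
  have "0 < 2 * (1 - q) + (1 - q) * (1 - p) * T + (1 - p) * (1 + q)"
    using p01 q01 T by (intro add_pos_nonneg mult_nonneg_nonneg) auto
  then have c: "c * (2 * (1 - q) + (1 - q) * (1 - p) * T + (1 - p) * (1 + q))
      = (1 - p) * q * (1 + e) + (1 - q) * (1 + p) / 2 + (1 - q) * (1 - p) * T / 2"
    unfolding c_def by simp
  have h4: "(1 - q) * h4 = q * (1 + e) - c * (1 + q)"
    unfolding h4_def using q01 by simp
  have "(1 - q) * (2 * c - 1/2 - p/2) = (1 - q) * ((1 - p) * h3)"
    using c h4 unfolding h3_def by (simp add: algebra_simps) algebra
  then have S1: "c + (c - 1/2) = p/2 + (1 - p) * h3"
    using q01 by simp
  have "q * ((1 - 1/T) * h4 + 1/T * h3) = q * h4 - q * (c - 1/2)"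
    using T unfolding h3_def by (simp add: field_simps)
  then have S4: "c + h4 = q * (1/2 + e) + q * ((1 - 1/T) * h4 + 1/T * h3)"
    using h4 by (simp add: algebra_simps)
  show "poisson_solution (P_pol exA (exP T) pol) (r_pol exA (exr e) pol) (\<lambda>_. c) ?h"
    unfolding poisson_solution_def
  proof (intro conjI allI)
    fix x
    show "kernel_apply (P_pol exA (exP T) pol) (\<lambda>_. c) x = c"
      by (rule kernel_apply_const[OF stochastic_exP[OF pol T]])
    show "c + ?h x = r_pol exA (exr e) pol x + kernel_apply (P_pol exA (exP T) pol) ?h x"
      using S1 S4 T by (cases x) (simp_all only: kernel_apply_exP[OF pol] r_pol_exr[OF pol]
        p_def[symmetric] q_def[symmetric], simp_all add: h3_def field_simps)
  qed
qed

lemma gain_le_star: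
  assumes pol: "is_policy exA pol"
  shows "gain exA (exP T) (exr e) pol s \<le> 1/2 + e/2"
proof -
  have stoch: "stochastic (P_pol exA (exP T) pol)"
    by (rule stochastic_exP[OF pol T])
  obtain g h where "poisson_solution (P_pol exA (exP T) pol) (r_pol exA (exr e) pol) g h"
    using poisson_solution_two_recurrent_classes[OF pol] poisson_solution_recurrent_34[OF pol]
      poisson_solution_recurrent_2[OF pol] by blast
  then have "convergent (\<lambda>n. (\<Sum>t<n. expect_at exA (exP T) pol t (r_pol exA (exr e) pol) s) / real n)"
    using poisson_averages_tendsto[OF stoch] convergentI by blast
  then show ?thesis
    using gain_le_superharmonic[OF stoch] h_star_superharmonic[OF pol] by blast
qed

lemma opt_gain_eq: "opt_gain exA (exP T) (exr e) s = 1/2 + e/2"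
  unfolding opt_gain_def
proof (rule cSup_eq_maximum)
  show "1/2 + e/2 \<in> (\<lambda>pol. gain exA (exP T) (exr e) pol s) ` {pol. is_policy exA pol}"
    using is_policy_star_pol gain_star by (intro image_eqI[where x = star_pol]) auto
qed (auto intro: gain_le_star)

end

section \<open>Blackwell optimality in the example\<close>

definition blackwell_threshold :: "real \<Rightarrow> real \<Rightarrow> real" where
  "blackwell_threshold T e = 1 - e / (1 + e + e * T / 2)"

lemma discounted_pair_bounds:
  fixes T e \<gamma> a b :: real
  assumes T: "T \<ge> 1" and e: "e > 0" and \<gamma>: "0 < \<gamma>" "\<gamma> < 1"
    and a: "a = 1/2 + \<gamma> * ((1 - 1/T) * a + 1/T * b)"
    and b: "b = 1/2 + e + \<gamma> * ((1 - 1/T) * b + 1/T * a)"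
  shows "(1 - \<gamma>) * (a + b) = 1 + e" and "0 < b - a" and "\<gamma> * (b - a) \<le> e * T / 2"
proof -
  show "(1 - \<gamma>) * (a + b) = 1 + e"
    using a b by (simp add: algebra_simps)
  have diff: "(1 - \<gamma> + 2 * \<gamma> / T) * (b - a) = e"
    using a b T by (simp add: field_simps)
  moreover have "0 < 1 - \<gamma> + 2 * \<gamma> / T"
    using \<gamma> T by (simp add: add_pos_nonneg)
  ultimately show gap: "0 < b - a"
    using e zero_less_mult_pos by metis
  have "(1 - \<gamma>) * (b - a) + (2 * \<gamma> / T) * (b - a) = e"
    using diff by (simp only: distrib_right)
  moreover have "0 \<le> (1 - \<gamma>) * (b - a)"
    using gap \<gamma> by simp
  ultimately have "(2 * \<gamma> / T) * (b - a) \<le> e"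
    by linarith
  then show "\<gamma> * (b - a) \<le> e * T / 2"
    using T by (simp add: field_simps)
qed

lemma above_blackwell_threshold:
  fixes T e \<gamma> :: real
  assumes T: "T \<ge> 1" and e: "e > 0" and \<gamma>: "blackwell_threshold T e < \<gamma>" "\<gamma> < 1"
  shows "(1 - \<gamma>) * (1 + e) + (1 - \<gamma>) * (e * T / 2) < e" and "0 < \<gamma>"
proof -
  have "0 < 1 + e + e * T / 2"
    using e T by (simp add: add_pos_nonneg)
  moreover have "1 - \<gamma> < e / (1 + e + e * T / 2)"
    using \<gamma>(1) unfolding blackwell_threshold_def by simp
  ultimately show slack: "(1 - \<gamma>) * (1 + e) + (1 - \<gamma>) * (e * T / 2) < e"
    by (simp add: less_divide_eq distrib_left)
  have "0 \<le> (1 - \<gamma>) * (e * T / 2)"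
    using \<gamma>(2) e T by simp
  then have "(1 - \<gamma>) * (1 + e) < e"
    using slack by linarith
  then have "1 < \<gamma> * (1 + e)"
    by (simp add: algebra_simps)
  then show "0 < \<gamma>"
    using e by (smt (verit) mult_nonpos_nonneg)
qed

lemma discounted_pair_gaps:
  fixes T e \<gamma> a b :: real
  assumes T: "T \<ge> 1" and e: "e > 0" and \<gamma>: "blackwell_threshold T e < \<gamma>" "\<gamma> < 1"
    and a: "a = 1/2 + \<gamma> * ((1 - 1/T) * a + 1/T * b)"
    and b: "b = 1/2 + e + \<gamma> * ((1 - 1/T) * b + 1/T * a)"
  shows "1/2 + \<gamma> * (1/2 + \<gamma> * (\<gamma> * a)) < \<gamma> * a"
    and "\<gamma> * (1/2 + \<gamma> * (\<gamma> * a)) < b"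
proof -
  note slack = above_blackwell_threshold(1)[OF T e \<gamma>]
  have "0 < \<gamma>"
    by (rule above_blackwell_threshold(2)[OF T e \<gamma>])
  note pair = discounted_pair_bounds[OF T e \<open>0 < \<gamma>\<close> \<gamma>(2) a b]
  have "(1 - \<gamma>) * (\<gamma> * (b - a)) \<le> (1 - \<gamma>) * (e * T / 2)"
    using pair(3) \<gamma>(2) by (intro mult_left_mono) auto
  moreover have "2 * (\<gamma> * ((1 - \<gamma>) * a)) = \<gamma> * (1 + e) - (1 - \<gamma>) * (\<gamma> * (b - a))"
  proof -
    have "2 * ((1 - \<gamma>) * a) = (1 - \<gamma>) * (a + b) - (1 - \<gamma>) * (b - a)"
      by (simp add: algebra_simps)
    then have twice_a: "2 * ((1 - \<gamma>) * a) = (1 + e) - (1 - \<gamma>) * (b - a)"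
      using pair(1) by linarith
    have "2 * (\<gamma> * ((1 - \<gamma>) * a)) = \<gamma> * (2 * ((1 - \<gamma>) * a))"
      by simp
    also have "\<dots> = \<gamma> * ((1 + e) - (1 - \<gamma>) * (b - a))"
      by (simp only: twice_a)
    finally show ?thesis
      by (simp add: algebra_simps)
  qed
  moreover have "\<gamma> * (1 + e) + (1 - \<gamma>) * (1 + e) = 1 + e"
    by (simp add: algebra_simps)
  ultimately have key: "1/2 < \<gamma> * ((1 - \<gamma>) * a)"
    using slack by linarith
  have "\<gamma> * a - (1/2 + \<gamma> * (1/2 + \<gamma> * (\<gamma> * a))) = (1 + \<gamma>) * (\<gamma> * ((1 - \<gamma>) * a) - 1/2)"
    by (simp add: algebra_simps)
  then show "1/2 + \<gamma> * (1/2 + \<gamma> * (\<gamma> * a)) < \<gamma> * a"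
    using key \<open>0 < \<gamma>\<close> by (smt (verit) mult_pos_pos)
  have "0 < (1 - \<gamma>) * a"
    using key \<open>0 < \<gamma>\<close> zero_less_mult_pos[of \<gamma> "(1 - \<gamma>) * a"] by linarith
  then have "0 < a" and "\<gamma> * ((1 - \<gamma>) * a) \<le> (1 - \<gamma>) * a"
    using \<open>0 < \<gamma>\<close> \<gamma>(2) zero_less_mult_pos[of "1 - \<gamma>" a] by (auto intro: mult_left_le_one_le)
  then have "1/2 < a - \<gamma> * a" and "\<gamma> * (\<gamma> * \<gamma>) * a \<le> \<gamma> * a"
    using key \<open>0 < \<gamma>\<close> \<gamma>(2) by (auto simp: algebra_simps mult_le_one intro!: mult_right_mono)
  moreover have "\<gamma> * (1/2 + \<gamma> * (\<gamma> * a)) = \<gamma> / 2 + \<gamma> * (\<gamma> * \<gamma>) * a"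
    by (simp add: algebra_simps)
  ultimately show "\<gamma> * (1/2 + \<gamma> * (\<gamma> * a)) < b"
    using pair(2) \<gamma>(2) by linarith
qed

context
  fixes T e :: real
  assumes T: "T \<ge> 1" and e: "e > 0"
begin

abbreviation star_value :: "real \<Rightarrow> st \<Rightarrow> real" where
  "star_value \<gamma> \<equiv> disc_value exA (exP T) (exr e) star_pol \<gamma>"

lemma blackwell_threshold_bounds: "0 < blackwell_threshold T e" "blackwell_threshold T e < 1"
proof -
  have "0 < 1 + e + e * T / 2" and "e < 1 + e + e * T / 2"
    using e T by (simp_all add: add_pos_nonneg)
  then show "0 < blackwell_threshold T e" "blackwell_threshold T e < 1"
    using e by (simp_all add: blackwell_threshold_def)
qed

lemma star_value_eqs:
  assumes "0 \<le> \<gamma>" "\<gamma> < 1"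
  shows "star_value \<gamma> S1 = \<gamma> * star_value \<gamma> S3"
    and "star_value \<gamma> S2 = 1/2 + \<gamma> * star_value \<gamma> S1"
    and "star_value \<gamma> S3 = 1/2 + \<gamma> * ((1 - 1/T) * star_value \<gamma> S3 + 1/T * star_value \<gamma> S4)"
    and "star_value \<gamma> S4 = 1/2 + e + \<gamma> * ((1 - 1/T) * star_value \<gamma> S4 + 1/T * star_value \<gamma> S3)"
proof -
  note bellman = disc_value_bellman[OF stochastic_exP[OF is_policy_star_pol T] assms, of "exr e"]
  note simps = kernel_apply_exP[OF is_policy_star_pol] r_pol_exr[OF is_policy_star_pol]
  show "star_value \<gamma> S1 = \<gamma> * star_value \<gamma> S3"
    by (rule trans[OF bellman]) (simp add: simps)
  show "star_value \<gamma> S2 = 1/2 + \<gamma> * star_value \<gamma> S1"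
    by (rule trans[OF bellman]) (simp add: simps)
  show "star_value \<gamma> S3 = 1/2 + \<gamma> * ((1 - 1/T) * star_value \<gamma> S3 + 1/T * star_value \<gamma> S4)"
    by (rule trans[OF bellman]) (simp add: simps)
  show "star_value \<gamma> S4 = 1/2 + e + \<gamma> * ((1 - 1/T) * star_value \<gamma> S4 + 1/T * star_value \<gamma> S3)"
    by (rule trans[OF bellman]) (simp add: simps)
qed

lemma star_value_gaps:
  assumes "blackwell_threshold T e < \<gamma>" "\<gamma> < 1"
  shows "1/2 + \<gamma> * star_value \<gamma> S2 < star_value \<gamma> S1"
    and "\<gamma> * star_value \<gamma> S2 < star_value \<gamma> S4"
proof -
  have "0 \<le> \<gamma>"
    using assms(1) blackwell_threshold_bounds(1) by simp
  note eqs = star_value_eqs[OF this assms(2)]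
  show "1/2 + \<gamma> * star_value \<gamma> S2 < star_value \<gamma> S1"
    "\<gamma> * star_value \<gamma> S2 < star_value \<gamma> S4"
    using discounted_pair_gaps[OF T e assms eqs(3,4)] unfolding eqs(1,2) by simp_all
qed

lemma star_value_bellman_defect:
  assumes pol: "is_policy exA pol" and "0 \<le> \<gamma>" "\<gamma> < 1"
  defines "V \<equiv> star_value \<gamma>" and "PV \<equiv> kernel_apply (P_pol exA (exP T) pol) (star_value \<gamma>)"
  shows "r_pol exA (exr e) pol S1 + \<gamma> * PV S1 = V S1 - pol S1 0 * (V S1 - (1/2 + \<gamma> * V S2))"
    and "r_pol exA (exr e) pol S2 + \<gamma> * PV S2 = V S2"
    and "r_pol exA (exr e) pol S3 + \<gamma> * PV S3 = V S3"
    and "r_pol exA (exr e) pol S4 + \<gamma> * PV S4 = V S4 - (1 - pol S4 0) * (V S4 - \<gamma> * V S2)"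
proof -
  note eqs = star_value_eqs[OF assms(2,3), folded V_def]
  note simps = PV_def V_def[symmetric] kernel_apply_exP[OF pol] r_pol_exr[OF pol]
  show "r_pol exA (exr e) pol S1 + \<gamma> * PV S1 = V S1 - pol S1 0 * (V S1 - (1/2 + \<gamma> * V S2))"
    by (simp only: simps, simp add: eqs(1) algebra_simps)
  show "r_pol exA (exr e) pol S2 + \<gamma> * PV S2 = V S2"
    by (simp only: simps, simp add: eqs(2))
  show "r_pol exA (exr e) pol S3 + \<gamma> * PV S3 = V S3"
    by (simp only: simps, rule eqs(3)[symmetric])
  have "r_pol exA (exr e) pol S4 + \<gamma> * PV S4
      = pol S4 0 * (1/2 + e + \<gamma> * ((1 - 1/T) * V S4 + 1/T * V S3)) + (1 - pol S4 0) * (\<gamma> * V S2)"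
    by (simp only: simps, simp add: algebra_simps)
  also have "\<dots> = pol S4 0 * V S4 + (1 - pol S4 0) * (\<gamma> * V S2)"
    by (simp only: eqs(4)[symmetric])
  finally show "r_pol exA (exr e) pol S4 + \<gamma> * PV S4 = V S4 - (1 - pol S4 0) * (V S4 - \<gamma> * V S2)"
    by (simp add: algebra_simps)
qed

lemma disc_value_le_star_value:
  assumes pol: "is_policy exA pol" and \<gamma>: "blackwell_threshold T e < \<gamma>" "\<gamma> < 1"
  shows "disc_value exA (exP T) (exr e) pol \<gamma> x \<le> star_value \<gamma> x"
proof -
  have "0 \<le> \<gamma>"
    using \<gamma>(1) blackwell_threshold_bounds(1) by simp
  note stoch = stochastic_exP[OF pol T]
  note defect = star_value_bellman_defect[OF pol \<open>0 \<le> \<gamma>\<close> \<gamma>(2)]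
  have "0 \<le> pol S1 0 * (star_value \<gamma> S1 - (1/2 + \<gamma> * star_value \<gamma> S2))"
    and "0 \<le> (1 - pol S4 0) * (star_value \<gamma> S4 - \<gamma> * star_value \<gamma> S2)"
    using star_value_gaps[OF \<gamma>] is_policy_exAD[OF pol] by (auto intro!: mult_nonneg_nonneg)
  then have "r_pol exA (exr e) pol y + \<gamma> * kernel_apply (P_pol exA (exP T) pol) (star_value \<gamma>) y
      \<le> star_value \<gamma> y" for y
    using defect by (cases y) simp_all
  then show ?thesis
    by (rule discounted_comparison[OF stoch \<open>0 \<le> \<gamma>\<close> \<gamma>(2)])
      (rule eq_refl, rule disc_value_bellman[OF stoch \<open>0 \<le> \<gamma>\<close> \<gamma>(2)])
qed

lemma blackwell_optimal_star: "blackwell_optimal exA (exP T) (exr e) star_pol"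
  unfolding blackwell_optimal_def
  using is_policy_star_pol blackwell_threshold_bounds(2) disc_value_le_star_value by blast

lemma blackwell_optimal_unique:
  assumes "blackwell_optimal exA (exP T) (exr e) pol"
  shows "pol = star_pol"
proof -
  obtain \<gamma>1 where pol: "is_policy exA pol" and "\<gamma>1 < 1"
    and opt: "\<And>\<gamma>. \<gamma>1 < \<gamma> \<Longrightarrow> \<gamma> < 1 \<Longrightarrow>
      \<forall>s. star_value \<gamma> s \<le> disc_value exA (exP T) (exr e) pol \<gamma> s"
    using assms is_policy_star_pol unfolding blackwell_optimal_def by blast
  define \<gamma> where "\<gamma> = (max \<gamma>1 (blackwell_threshold T e) + 1) / 2"
  have \<gamma>: "blackwell_threshold T e < \<gamma>" "\<gamma>1 < \<gamma>" "\<gamma> < 1" "0 \<le> \<gamma>"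
    using \<open>\<gamma>1 < 1\<close> blackwell_threshold_bounds unfolding \<gamma>_def by auto
  have same: "disc_value exA (exP T) (exr e) pol \<gamma> = star_value \<gamma>"
    using opt[OF \<gamma>(2,3)] disc_value_le_star_value[OF pol \<gamma>(1,3)] by (auto intro: antisym)
  have fixed: "r_pol exA (exr e) pol x + \<gamma> * kernel_apply (P_pol exA (exP T) pol) (star_value \<gamma>) x
      = star_value \<gamma> x" for x
    using disc_value_bellman[OF stochastic_exP[OF pol T] \<gamma>(4,3), of "exr e" x] unfolding same
    by (rule sym)
  note defect = star_value_bellman_defect[OF pol \<gamma>(4,3)]
  note gaps = star_value_gaps[OF \<gamma>(1,3)]
  have "pol S1 0 * (star_value \<gamma> S1 - (1/2 + \<gamma> * star_value \<gamma> S2)) = 0"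
    using fixed[of S1] defect(1) by simp
  moreover have "(1 - pol S4 0) * (star_value \<gamma> S4 - \<gamma> * star_value \<gamma> S2) = 0"
    using fixed[of S4] defect(4) by simp
  ultimately show ?thesis
    using policy_eq_star_pol[OF pol] gaps by simp
qed

end

theorem theorem28:
  fixes T \<epsilon> :: real
  assumes "T \<ge> 1" and "\<epsilon> > 0"
  shows "(\<exists>pol. blackwell_optimal exA (exP T) (exr \<epsilon>) pol)
    \<and> (\<forall>pol. blackwell_optimal exA (exP T) (exr \<epsilon>) pol \<longrightarrow>
          span (bias exA (exP T) (exr \<epsilon>) pol) = \<epsilon> * T / 2 + \<epsilon> + 1 / 2)
    \<and> (\<exists>pol. is_policy exA pol
          \<and> (\<exists>c. \<forall>s. gain exA (exP T) (exr \<epsilon>) pol s = c)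
          \<and> (\<forall>s. gain exA (exP T) (exr \<epsilon>) pol s = opt_gain exA (exP T) (exr \<epsilon>) s - \<epsilon> / 2)
          \<and> span (bias exA (exP T) (exr \<epsilon>) pol) = 1 / 2)"
proof (intro conjI)
  show "\<exists>pol. blackwell_optimal exA (exP T) (exr \<epsilon>) pol"
    using blackwell_optimal_star[OF assms] by blast
  show "\<forall>pol. blackwell_optimal exA (exP T) (exr \<epsilon>) pol \<longrightarrow>
      span (bias exA (exP T) (exr \<epsilon>) pol) = \<epsilon> * T / 2 + \<epsilon> + 1 / 2"
    using blackwell_optimal_unique[OF assms] bias_star[OF assms] span_h_star[OF assms] by metis
  show "\<exists>pol. is_policy exA pol
      \<and> (\<exists>c. \<forall>s. gain exA (exP T) (exr \<epsilon>) pol s = c)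
      \<and> (\<forall>s. gain exA (exP T) (exr \<epsilon>) pol s = opt_gain exA (exP T) (exr \<epsilon>) s - \<epsilon> / 2)
      \<and> span (bias exA (exP T) (exr \<epsilon>) pol) = 1 / 2"
    using is_policy_cycle_pol gain_cycle[OF assms] opt_gain_eq[OF assms] bias_cycle[OF assms]
      span_h_cycle[OF assms]
    by (intro exI[where x = cycle_pol] conjI exI[where x = "1/2"]) auto
qed

end
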